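(* Let $(V_i)_{i\in I}$ be a set of $n$-parameter persistence modules such that $\prod_{i\in I}V_i$ is q-tame. Then the canonical map $\varphi:\bigoplus_{i\in I}V_i\to\prod_{i\in I}V_i$ is a weak equivalence, i.e. $\ker\varphi$ and $\operatorname{cok}\varphi$ are ephemeral.
   Context: Fix a field $\mathbb{k}$. An $n$-parameter persistence module is a functor $V:\mathbf{R}^n\to\mathbf{Vect}_{\mathbb{k}}$ ($\mathbf{R}^n$ with componentwise order), structure maps $V_{s,t}$. Write $s\ll t$ if $s_i<t_i$ for all $i$. $V$ is q-tame if $V_{s,t}$ has finite rank whenever $s\ll t$, and ephemeral if $V_{s,t}=0$ whenever $s\ll t$. Direct sums and products are computed pointwise. *)

theory Defs
  imports "HOL-Analysis.Finite_Cartesian_Product" "HOL-Algebra.Module" "HOL-Algebra.FiniteProduct"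
begin

text \<open>Parameter space: R^n, modelled as real^'n for a finite index type 'n,
  with the componentwise order (the library's less_eq on vec).
  The field k is a HOL-Algebra ring R with field R; vector spaces are
  HOL-Algebra modules over R.\<close>

definition ll :: "real^'n \<Rightarrow> real^'n \<Rightarrow> bool" where
  "ll s t \<longleftrightarrow> (\<forall>i. s $ i < t $ i)"

definition linmap :: "('k,'r) ring_scheme \<Rightarrow> ('k,'v,'a) module_scheme \<Rightarrow> ('k,'w,'b) module_scheme
    \<Rightarrow> ('v \<Rightarrow> 'w) \<Rightarrow> bool" where
  "linmap R M N h \<longleftrightarrow>
     (\<forall>x\<in>carrier M. h x \<in> carrier N) \<and>
     (\<forall>x\<in>carrier M. \<forall>y\<in>carrier M. h (x \<oplus>\<^bsub>M\<^esub> y) = h x \<oplus>\<^bsub>N\<^esub> h y) \<and>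
     (\<forall>a\<in>carrier R. \<forall>x\<in>carrier M. h (a \<odot>\<^bsub>M\<^esub> x) = a \<odot>\<^bsub>N\<^esub> h x)"

definition pmod :: "('k,'r) ring_scheme \<Rightarrow> (real^'n \<Rightarrow> ('k,'v) module)
    \<Rightarrow> (real^'n \<Rightarrow> real^'n \<Rightarrow> 'v \<Rightarrow> 'v) \<Rightarrow> bool" where
  "pmod R M f \<longleftrightarrow>
     (\<forall>s. module R (M s)) \<and>
     (\<forall>s t. s \<le> t \<longrightarrow> linmap R (M s) (M t) (f s t)) \<and>
     (\<forall>s. \<forall>x\<in>carrier (M s). f s s x = x) \<and>
     (\<forall>s t u. s \<le> t \<longrightarrow> t \<le> u \<longrightarrow> (\<forall>x\<in>carrier (M s). f s u x = f t u (f s t x)))"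

definition lspan :: "('k,'r) ring_scheme \<Rightarrow> ('k,'w) module \<Rightarrow> 'w set \<Rightarrow> 'w set" where
  "lspan R N B = {finsum N (\<lambda>b. c b \<odot>\<^bsub>N\<^esub> b) B | c. c \<in> B \<rightarrow> carrier R}"

definition finite_rank :: "('k,'r) ring_scheme \<Rightarrow> ('k,'v) module \<Rightarrow> ('k,'w) module
    \<Rightarrow> ('v \<Rightarrow> 'w) \<Rightarrow> bool" where
  "finite_rank R M N h \<longleftrightarrow>
     (\<exists>B. finite B \<and> B \<subseteq> h ` carrier M \<and> h ` carrier M \<subseteq> lspan R N B)"

definition q_tame :: "('k,'r) ring_scheme \<Rightarrow> (real^'n \<Rightarrow> ('k,'v) module)
    \<Rightarrow> (real^'n \<Rightarrow> real^'n \<Rightarrow> 'v \<Rightarrow> 'v) \<Rightarrow> bool" where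
  "q_tame R M f \<longleftrightarrow> (\<forall>s t. ll s t \<longrightarrow> finite_rank R (M s) (M t) (f s t))"

definition ephemeral :: "(real^'n \<Rightarrow> ('k,'v) module)
    \<Rightarrow> (real^'n \<Rightarrow> real^'n \<Rightarrow> 'v \<Rightarrow> 'v) \<Rightarrow> bool" where
  "ephemeral M f \<longleftrightarrow> (\<forall>s t. ll s t \<longrightarrow> (\<forall>x\<in>carrier (M s). f s t x = \<zero>\<^bsub>M t\<^esub>))"

definition ker_mod :: "(real^'n \<Rightarrow> ('k,'v) module) \<Rightarrow> (real^'n \<Rightarrow> ('k,'w) module)
    \<Rightarrow> (real^'n \<Rightarrow> 'v \<Rightarrow> 'w) \<Rightarrow> real^'n \<Rightarrow> ('k,'v) module" where
  "ker_mod M N phi s =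
     \<lparr>carrier = {x \<in> carrier (M s). phi s x = \<zero>\<^bsub>N s\<^esub>},
      mult = mult (M s), one = one (M s), zero = zero (M s), add = add (M s),
      smult = smult (M s)\<rparr>"

definition ker_map :: "(real^'n \<Rightarrow> real^'n \<Rightarrow> 'v \<Rightarrow> 'v) \<Rightarrow> real^'n \<Rightarrow> real^'n \<Rightarrow> 'v \<Rightarrow> 'v" where
  "ker_map f = f"

text \<open>Cokernel of phi: at s, the quotient N s / phi s (M s), realised by cosets.\<close>
definition im_sp :: "(real^'n \<Rightarrow> ('k,'v) module) \<Rightarrow> (real^'n \<Rightarrow> 'v \<Rightarrow> 'w) \<Rightarrow> real^'n \<Rightarrow> 'w set" where
  "im_sp M phi s = phi s ` carrier (M s)"

definition coset_of :: "('k,'w) module \<Rightarrow> 'w set \<Rightarrow> 'w \<Rightarrow> 'w set" where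
  "coset_of N H y = {y \<oplus>\<^bsub>N\<^esub> h | h. h \<in> H}"

definition cok_mod :: "(real^'n \<Rightarrow> ('k,'v) module) \<Rightarrow> (real^'n \<Rightarrow> ('k,'w) module)
    \<Rightarrow> (real^'n \<Rightarrow> 'v \<Rightarrow> 'w) \<Rightarrow> real^'n \<Rightarrow> ('k,'w set) module" where
  "cok_mod M N phi s =
     \<lparr>carrier = coset_of (N s) (im_sp M phi s) ` carrier (N s),
      mult = undefined, one = undefined,
      zero = im_sp M phi s,
      add = (\<lambda>A B. {a \<oplus>\<^bsub>N s\<^esub> b | a b. a \<in> A \<and> b \<in> B}),
      smult = (\<lambda>c A. {c \<odot>\<^bsub>N s\<^esub> a \<oplus>\<^bsub>N s\<^esub> h | a h. a \<in> A \<and> h \<in> im_sp M phi s})\<rparr>"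

definition cok_map :: "(real^'n \<Rightarrow> ('k,'v) module) \<Rightarrow> (real^'n \<Rightarrow> ('k,'w) module)
    \<Rightarrow> (real^'n \<Rightarrow> 'v \<Rightarrow> 'w) \<Rightarrow> (real^'n \<Rightarrow> real^'n \<Rightarrow> 'w \<Rightarrow> 'w)
    \<Rightarrow> real^'n \<Rightarrow> real^'n \<Rightarrow> 'w set \<Rightarrow> 'w set" where
  "cok_map M N phi g s t A = {g s t a \<oplus>\<^bsub>N t\<^esub> h | a h. a \<in> A \<and> h \<in> im_sp M phi t}"

definition weak_equiv :: "(real^'n \<Rightarrow> ('k,'v) module) \<Rightarrow> (real^'n \<Rightarrow> real^'n \<Rightarrow> 'v \<Rightarrow> 'v)
    \<Rightarrow> (real^'n \<Rightarrow> ('k,'w) module) \<Rightarrow> (real^'n \<Rightarrow> real^'n \<Rightarrow> 'w \<Rightarrow> 'w)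
    \<Rightarrow> (real^'n \<Rightarrow> 'v \<Rightarrow> 'w) \<Rightarrow> bool" where
  "weak_equiv M f N g phi \<longleftrightarrow>
     ephemeral (ker_mod M N phi) (ker_map f) \<and> ephemeral (cok_mod M N phi) (cok_map M N phi g)"

definition prod_mod :: "'i set \<Rightarrow> ('i \<Rightarrow> real^'n \<Rightarrow> ('k,'v) module) \<Rightarrow> real^'n
    \<Rightarrow> ('k,'i \<Rightarrow> 'v) module" where
  "prod_mod I M s =
     \<lparr>carrier = (\<Pi>\<^sub>E i\<in>I. carrier (M i s)),
      mult = undefined, one = undefined,
      zero = (\<lambda>i\<in>I. \<zero>\<^bsub>M i s\<^esub>),
      add = (\<lambda>x y. \<lambda>i\<in>I. x i \<oplus>\<^bsub>M i s\<^esub> y i),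
      smult = (\<lambda>a x. \<lambda>i\<in>I. a \<odot>\<^bsub>M i s\<^esub> x i)\<rparr>"

definition sum_mod :: "'i set \<Rightarrow> ('i \<Rightarrow> real^'n \<Rightarrow> ('k,'v) module) \<Rightarrow> real^'n
    \<Rightarrow> ('k,'i \<Rightarrow> 'v) module" where
  "sum_mod I M s =
     \<lparr>carrier = {x \<in> (\<Pi>\<^sub>E i\<in>I. carrier (M i s)). finite {i \<in> I. x i \<noteq> \<zero>\<^bsub>M i s\<^esub>}},
      mult = undefined, one = undefined,
      zero = (\<lambda>i\<in>I. \<zero>\<^bsub>M i s\<^esub>),
      add = (\<lambda>x y. \<lambda>i\<in>I. x i \<oplus>\<^bsub>M i s\<^esub> y i),
      smult = (\<lambda>a x. \<lambda>i\<in>I. a \<odot>\<^bsub>M i s\<^esub> x i)\<rparr>"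

definition fam_map :: "'i set \<Rightarrow> ('i \<Rightarrow> real^'n \<Rightarrow> real^'n \<Rightarrow> 'v \<Rightarrow> 'v)
    \<Rightarrow> real^'n \<Rightarrow> real^'n \<Rightarrow> ('i \<Rightarrow> 'v) \<Rightarrow> ('i \<Rightarrow> 'v)" where
  "fam_map I f s t x = (\<lambda>i\<in>I. f i s t (x i))"

definition canon :: "real^'n \<Rightarrow> ('i \<Rightarrow> 'v) \<Rightarrow> ('i \<Rightarrow> 'v)" where
  "canon s x = x"

end

theory Submission
  imports Defs "HOL-Algebra.AbelCoset" "Jordan_Normal_Form.Missing_VectorSpace"
begin

text \<open>The canonical map is the inclusion of the finitely supported families into all families,
  so its kernel vanishes. For \<open>s << t\<close> the structure map of the product is the product of the
  maps \<open>f i s t\<close>. If infinitely many of them were nonzero, the images of vectors supported at a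
  single index would give arbitrarily large diagonal, hence linearly independent, families inside
  the image of this finite-rank map. So only finitely many \<open>f i s t\<close> are nonzero, the structure
  map of the product lands in the direct sum, and therefore kills the cokernel.\<close>

lemma ll_imp_le: "ll s t \<Longrightarrow> s \<le> t"
  by (auto simp: ll_def less_eq_vec_def less_imp_le)

lemma linmap_zero:
  assumes "module R M" "module R N" "linmap R M N h"
  shows "h \<zero>\<^bsub>M\<^esub> = \<zero>\<^bsub>N\<^esub>"
proof -
  interpret M: module R M by fact
  interpret N: module R N by fact
  have "h \<zero>\<^bsub>M\<^esub> \<in> carrier N" "h \<zero>\<^bsub>M\<^esub> \<oplus>\<^bsub>N\<^esub> h \<zero>\<^bsub>M\<^esub> = h \<zero>\<^bsub>M\<^esub>"
    using assms(3) M.zero_closed M.l_zero unfolding linmap_def by metis+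
  then show ?thesis by (metis N.add.l_cancel_one)
qed

lemma module_prod_mod:
  assumes "cring R" and mods: "\<forall>i\<in>I. module R (M i s)"
  shows "module R (prod_mod I M s)"
proof -
  have ag: "\<And>i. i \<in> I \<Longrightarrow> abelian_group (M i s)"
    using mods module.axioms(2) by blast
  then have am: "\<And>i. i \<in> I \<Longrightarrow> abelian_monoid (M i s)"
    using abelian_group.axioms(1) by blast
  show ?thesis
  proof (rule moduleI[OF assms(1)])
    show "abelian_group (prod_mod I M s)"
    proof (rule abelian_groupI)
      fix x assume x: "x \<in> carrier (prod_mod I M s)"
      show "\<exists>y\<in>carrier (prod_mod I M s). y \<oplus>\<^bsub>prod_mod I M s\<^esub> x = \<zero>\<^bsub>prod_mod I M s\<^esub>"
        using x ag
        by (intro bexI[of _ "\<lambda>i\<in>I. \<ominus>\<^bsub>M i s\<^esub> x i"])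
           (auto simp: prod_mod_def PiE_iff abelian_group.l_neg abelian_group.a_inv_closed)
    qed (use am in \<open>auto simp: prod_mod_def PiE_iff extensional_def abelian_monoid.a_closed
           abelian_monoid.zero_closed abelian_monoid.a_assoc abelian_monoid.l_zero
           intro!: restrict_ext abelian_monoid.a_comm\<close>)
  qed (use mods in \<open>auto simp: prod_mod_def PiE_iff extensional_def module.smult_l_distr
         module.smult_r_distr module.smult_assoc1 module.smult_closed module.smult_one
         intro!: restrict_ext\<close>)
qed

lemma a_inv_prod_mod:
  assumes "cring R" and mods: "\<forall>i\<in>I. module R (M i s)" and x: "x \<in> carrier (prod_mod I M s)"
  shows "\<ominus>\<^bsub>prod_mod I M s\<^esub> x = (\<lambda>i\<in>I. \<ominus>\<^bsub>M i s\<^esub> x i)"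
proof -
  interpret P: module R "prod_mod I M s" using module_prod_mod assms(1) mods .
  show ?thesis
    using x mods
    by (intro P.minus_equality)
       (auto simp: prod_mod_def PiE_iff module_def abelian_group.l_neg abelian_group.a_inv_closed)
qed

lemma additive_subgroup_sum_mod:
  assumes "cring R" and mods: "\<forall>i\<in>I. module R (M i s)"
  shows "additive_subgroup (carrier (sum_mod I M s)) (prod_mod I M s)"
proof -
  interpret P: module R "prod_mod I M s" using module_prod_mod assms(1) mods .
  let ?supp = "\<lambda>x. {i \<in> I. x i \<noteq> \<zero>\<^bsub>M i s\<^esub>}"
  have sum_iff: "x \<in> carrier (sum_mod I M s) \<longleftrightarrow>
      x \<in> carrier (prod_mod I M s) \<and> finite (?supp x)" for x
    by (simp add: sum_mod_def prod_mod_def)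
  have supp_add: "?supp (x \<oplus>\<^bsub>prod_mod I M s\<^esub> y) \<subseteq> ?supp x \<union> ?supp y"
    if "x \<in> carrier (prod_mod I M s)" "y \<in> carrier (prod_mod I M s)" for x y
    using that mods by (auto simp: prod_mod_def PiE_iff module_def abelian_group_def
      abelian_monoid.l_zero abelian_monoid.zero_closed)
  have neg_zero: "\<ominus>\<^bsub>M i s\<^esub> \<zero>\<^bsub>M i s\<^esub> = \<zero>\<^bsub>M i s\<^esub>" if "i \<in> I" for i
    using mods that by (metis module.axioms(2) abelian_group.axioms(1) abelian_group.minus_equality
      abelian_monoid.l_zero abelian_monoid.zero_closed)
  have supp_inv: "?supp (\<ominus>\<^bsub>prod_mod I M s\<^esub> x) \<subseteq> ?supp x" if "x \<in> carrier (prod_mod I M s)" for x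
    using that neg_zero by (auto simp: a_inv_prod_mod[of R I M s, OF assms(1) mods])
  show ?thesis
  proof (intro additive_subgroupI P.add.subgroupI)
    have "\<zero>\<^bsub>prod_mod I M s\<^esub> \<in> carrier (sum_mod I M s)"
      using P.zero_closed by (simp add: sum_iff) (simp add: prod_mod_def)
    then show "carrier (sum_mod I M s) \<noteq> {}" by blast
  qed (auto simp: sum_iff a_inv_def[symmetric]
      intro: finite_subset[OF supp_add] finite_subset[OF supp_inv])
qed

lemma finsum_prod_mod_apply:
  assumes "cring R" and mods: "\<forall>i\<in>I. module R (M i s)" and "finite A"
    and g: "g \<in> A \<rightarrow> carrier (prod_mod I M s)" and i: "i \<in> I"
  shows "finsum (prod_mod I M s) g A i = finsum (M i s) (\<lambda>a. g a i) A"
  using \<open>finite A\<close> g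
proof (induction A rule: finite_induct)
  case empty
  interpret P: module R "prod_mod I M s" using module_prod_mod assms(1) mods .
  interpret Mi: module R "M i s" using mods i by blast
  show ?case using i by (simp only: P.finsum_empty Mi.finsum_empty) (simp add: prod_mod_def)
next
  case (insert a A)
  interpret P: module R "prod_mod I M s" using module_prod_mod assms(1) mods .
  interpret Mi: module R "M i s" using mods i by blast
  have "(\<lambda>a. g a i) \<in> insert a A \<rightarrow> carrier (M i s)"
    using insert.prems i by (auto simp: prod_mod_def PiE_iff)
  moreover have "finsum (prod_mod I M s) g (insert a A)
      = g a \<oplus>\<^bsub>prod_mod I M s\<^esub> finsum (prod_mod I M s) g A"
    using insert by (intro P.finsum_insert) auto
  ultimately show ?case
    using insert i by (simp add: Mi.finsum_insert) (simp add: prod_mod_def)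
qed

lemma lin_indpt_prod_mod_diagonal:
  assumes "field R" and mods: "\<forall>i\<in>I. module R (M i s)" and "finite J" "J \<subseteq> I"
    and e: "e \<in> J \<rightarrow> carrier (prod_mod I M s)"
    and diag: "\<And>j. j \<in> J \<Longrightarrow> e j j \<noteq> \<zero>\<^bsub>M j s\<^esub>"
    and off_diag: "\<And>j k. j \<in> J \<Longrightarrow> k \<in> I \<Longrightarrow> k \<noteq> j \<Longrightarrow> e j k = \<zero>\<^bsub>M k s\<^esub>"
  shows "\<not> module.lin_dep R (prod_mod I M s) (e ` J)"
proof
  have cr: "cring R" using \<open>field R\<close> by (simp add: field_def domain_def)
  interpret P: module R "prod_mod I M s" using module_prod_mod cr mods .
  assume "P.lin_dep (e ` J)"
  moreover have "e ` J \<subseteq> carrier (prod_mod I M s)" using e by blast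
  ultimately obtain a v where a: "a \<in> e ` J \<rightarrow> carrier R" "P.lincomb a (e ` J) = \<zero>\<^bsub>prod_mod I M s\<^esub>"
    and v: "v \<in> e ` J" "a v \<noteq> \<zero>\<^bsub>R\<^esub>"
    using P.finite_lin_dep[OF finite_imageI[OF \<open>finite J\<close>]] by meson
  then obtain k where k: "k \<in> J" "v = e k" by blast
  have kI: "k \<in> I" using k \<open>J \<subseteq> I\<close> by blast
  interpret Mk: vectorspace R "M k s" using mods kI \<open>field R\<close> by (simp add: vectorspace_def)
  have ekk: "e k k \<in> carrier (M k s)" using e k kI by (auto simp: prod_mod_def PiE_iff)
  have av: "a v \<in> carrier R" using a v by blast
  have "\<zero>\<^bsub>M k s\<^esub> = P.lincomb a (e ` J) k"
    using a(2) kI by (simp add: prod_mod_def)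
  also have "\<dots> = (\<Oplus>\<^bsub>M k s\<^esub>w\<in>e ` J. (a w \<odot>\<^bsub>prod_mod I M s\<^esub> w) k)"
    unfolding P.lincomb_def using a(1) e \<open>finite J\<close> kI
    by (intro finsum_prod_mod_apply[of R I M s, OF cr mods]) auto
  also have "\<dots> = (\<Oplus>\<^bsub>M k s\<^esub>w\<in>e ` J. if v = w then a v \<odot>\<^bsub>M k s\<^esub> e k k else \<zero>\<^bsub>M k s\<^esub>)"
  proof (rule Mk.finsum_cong')
    fix w assume "w \<in> e ` J"
    then obtain j where j: "j \<in> J" "w = e j" by blast
    have "(a w \<odot>\<^bsub>prod_mod I M s\<^esub> w) k = a w \<odot>\<^bsub>M k s\<^esub> w k"
      using kI by (simp add: prod_mod_def)
    moreover have "w k = \<zero>\<^bsub>M k s\<^esub>" "v \<noteq> w" if "j \<noteq> k"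
      using off_diag[OF j(1) kI] diag[OF k(1)] that j(2) k(2) by auto
    ultimately show "(a w \<odot>\<^bsub>prod_mod I M s\<^esub> w) k
        = (if v = w then a v \<odot>\<^bsub>M k s\<^esub> e k k else \<zero>\<^bsub>M k s\<^esub>)"
      using a(1) j k by (cases "j = k") (auto simp: Pi_iff)
  qed (use av ekk in auto)
  also have "\<dots> = a v \<odot>\<^bsub>M k s\<^esub> e k k"
    using Mk.finsum_singleton[of v "e ` J" "\<lambda>_. a v \<odot>\<^bsub>M k s\<^esub> e k k"] v \<open>finite J\<close> av ekk
    by simp
  finally have "e k k = inv\<^bsub>R\<^esub> (a v) \<odot>\<^bsub>M k s\<^esub> \<zero>\<^bsub>M k s\<^esub>"
    using Mk.mult_inverse av ekk v by metis
  then show False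
    using diag[OF k(1)] av v by simp
qed

lemma (in vectorspace) lin_indpt_card_le_span:
  assumes "finite A" "finite B" "B \<subseteq> carrier V" "lin_indpt A" "A \<subseteq> span B"
  shows "card A \<le> card B"
  using replacement[OF assms] by auto

lemma finite_rank_lin_indpt_card_bounded:
  assumes "vectorspace R N" "finite_rank R M N h" "h ` carrier M \<subseteq> carrier N"
  obtains n where "\<And>A. A \<subseteq> h ` carrier M \<Longrightarrow> finite A \<Longrightarrow> \<not> module.lin_dep R N A \<Longrightarrow> card A \<le> n"
proof -
  interpret N: vectorspace R N by fact
  obtain B where B: "finite B" "B \<subseteq> h ` carrier M" "h ` carrier M \<subseteq> lspan R N B"
    using assms(2) by (auto simp: finite_rank_def)
  have B_carrier: "B \<subseteq> carrier N" using B(2) assms(3) by blast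
  have span_B: "lspan R N B = N.span B"
    unfolding lspan_def N.finite_span[OF B(1) B_carrier] N.lincomb_def ..
  show thesis
  proof (rule that)
    fix A assume A: "A \<subseteq> h ` carrier M" "finite A" "\<not> N.lin_dep A"
    then have "A \<subseteq> N.span B" using B(3) span_B by blast
    with A(2,3) show "card A \<le> card B"
      using N.lin_indpt_card_le_span[OF _ B(1) B_carrier] by blast
  qed
qed

lemma finite_rank_fam_map_imp_finite_support:
  assumes "field R"
    and mods: "\<forall>i\<in>I. module R (M i s) \<and> module R (M i t)"
    and lin: "\<forall>i\<in>I. linmap R (M i s) (M i t) (f i s t)"
    and fr: "finite_rank R (prod_mod I M s) (prod_mod I M t) (fam_map I f s t)"
  shows "finite {i \<in> I. \<exists>x\<in>carrier (M i s). f i s t x \<noteq> \<zero>\<^bsub>M i t\<^esub>}" (is "finite ?supp")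
proof (rule ccontr)
  assume "infinite ?supp"
  have cr: "cring R" using \<open>field R\<close> by (simp add: field_def domain_def)
  have vs: "vectorspace R (prod_mod I M t)"
    using module_prod_mod[of R I M t] cr mods \<open>field R\<close> by (simp add: vectorspace_def)
  have into: "fam_map I f s t ` carrier (prod_mod I M s) \<subseteq> carrier (prod_mod I M t)"
    using lin by (auto simp: fam_map_def prod_mod_def linmap_def PiE_iff)
  obtain n where n: "\<And>A. A \<subseteq> fam_map I f s t ` carrier (prod_mod I M s) \<Longrightarrow> finite A
      \<Longrightarrow> \<not> module.lin_dep R (prod_mod I M t) A \<Longrightarrow> card A \<le> n"
    using finite_rank_lin_indpt_card_bounded[OF vs fr into] by metis
  obtain J where J: "J \<subseteq> ?supp" "finite J" "card J = Suc n"
    using infinite_arbitrarily_large[OF \<open>infinite ?supp\<close>] by blast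
  have "\<forall>i\<in>?supp. \<exists>x. x \<in> carrier (M i s) \<and> f i s t x \<noteq> \<zero>\<^bsub>M i t\<^esub>" by blast
  then obtain y where y: "\<forall>i\<in>?supp. y i \<in> carrier (M i s) \<and> f i s t (y i) \<noteq> \<zero>\<^bsub>M i t\<^esub>"
    by (rule bchoice[elim_format]) blast
  define d where "d i = (\<lambda>j\<in>I. if j = i then y i else \<zero>\<^bsub>M j s\<^esub>)" for i
  define e where "e i = fam_map I f s t (d i)" for i
  have zero_closed: "\<zero>\<^bsub>M j s\<^esub> \<in> carrier (M j s)" if "j \<in> I" for j
    using mods that abelian_monoid.zero_closed[OF abelian_group.axioms(1)[OF module.axioms(2)]] by blast
  have "d i \<in> carrier (prod_mod I M s)" if "i \<in> J" for i
    using that J(1) y zero_closed by (auto simp: d_def prod_mod_def)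
  then have e_img: "e ` J \<subseteq> fam_map I f s t ` carrier (prod_mod I M s)"
    unfolding e_def by blast
  have diag: "e i i \<noteq> \<zero>\<^bsub>M i t\<^esub>" if "i \<in> J" for i
    using that J(1) y by (auto simp: e_def d_def fam_map_def)
  have off_diag: "e i k = \<zero>\<^bsub>M k t\<^esub>" if "i \<in> J" "k \<in> I" "k \<noteq> i" for i k
  proof -
    have "e i k = f k s t \<zero>\<^bsub>M k s\<^esub>" using that by (simp add: e_def d_def fam_map_def)
    also have "\<dots> = \<zero>\<^bsub>M k t\<^esub>"
      using mods lin \<open>k \<in> I\<close> by (intro linmap_zero) auto
    finally show ?thesis .
  qed
  have "inj_on e J"
  proof (rule inj_onI, rule ccontr)
    fix i k assume "i \<in> J" "k \<in> J" "e i = e k" "i \<noteq> k"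
    then show False using diag[of i] off_diag[of k i] J(1) by auto
  qed
  have "\<not> module.lin_dep R (prod_mod I M t) (e ` J)"
    using \<open>field R\<close> mods J(1,2) e_img into diag off_diag
    by (intro lin_indpt_prod_mod_diagonal) blast+
  then have "card (e ` J) \<le> n"
    using n e_img J(2) by blast
  with \<open>inj_on e J\<close> J(3) show False
    by (simp add: card_image)
qed

lemma fam_map_into_sum_mod:
  assumes lin: "\<forall>i\<in>I. linmap R (M i s) (M i t) (f i s t)"
    and fin: "finite {i \<in> I. \<exists>x\<in>carrier (M i s). f i s t x \<noteq> \<zero>\<^bsub>M i t\<^esub>}"
  shows "fam_map I f s t ` carrier (prod_mod I M s) \<subseteq> carrier (sum_mod I M t)"
proof
  fix z assume "z \<in> fam_map I f s t ` carrier (prod_mod I M s)"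
  then obtain x where x: "x \<in> (\<Pi>\<^sub>E i\<in>I. carrier (M i s))" and z: "z = (\<lambda>i\<in>I. f i s t (x i))"
    by (auto simp: fam_map_def prod_mod_def)
  have "z \<in> (\<Pi>\<^sub>E i\<in>I. carrier (M i t))"
    using x lin by (auto simp: z linmap_def PiE_iff)
  moreover have "{i \<in> I. z i \<noteq> \<zero>\<^bsub>M i t\<^esub>} \<subseteq> {i \<in> I. \<exists>x\<in>carrier (M i s). f i s t x \<noteq> \<zero>\<^bsub>M i t\<^esub>}"
    using x by (auto simp: z)
  ultimately show "z \<in> carrier (sum_mod I M t)"
    using finite_subset[OF _ fin] by (simp add: sum_mod_def)
qed

lemma cok_map_eq_zero_if_into_image:
  assumes "abelian_group (N s)" "abelian_group (N t)"
    and "additive_subgroup (im_sp M phi s) (N s)" "additive_subgroup (im_sp M phi t) (N t)"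
    and into: "g s t ` carrier (N s) \<subseteq> im_sp M phi t"
    and X: "X \<in> carrier (cok_mod M N phi s)"
  shows "cok_map M N phi g s t X = \<zero>\<^bsub>cok_mod M N phi t\<^esub>"
proof -
  interpret Ns: abelian_group "N s" by fact
  interpret Nt: abelian_group "N t" by fact
  interpret Hs: additive_subgroup "im_sp M phi s" "N s" by fact
  interpret Ht: additive_subgroup "im_sp M phi t" "N t" by fact
  obtain y where y: "y \<in> carrier (N s)" and X_eq: "X = coset_of (N s) (im_sp M phi s) y"
    using X by (auto simp: cok_mod_def)
  have X_carrier: "X \<subseteq> carrier (N s)"
    using y Hs.a_subset by (auto simp: X_eq coset_of_def)
  have "y = y \<oplus>\<^bsub>N s\<^esub> \<zero>\<^bsub>N s\<^esub>" using y by simp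
  then have "y \<in> X"
    unfolding X_eq coset_of_def using Hs.zero_closed by blast
  have "cok_map M N phi g s t X = im_sp M phi t"
  proof
    show "cok_map M N phi g s t X \<subseteq> im_sp M phi t"
      using into X_carrier by (auto simp: cok_map_def)
    show "im_sp M phi t \<subseteq> cok_map M N phi g s t X"
    proof
      fix z assume z: "z \<in> im_sp M phi t"
      have gy: "g s t y \<in> im_sp M phi t" using into y by blast
      then have "z = g s t y \<oplus>\<^bsub>N t\<^esub> (\<ominus>\<^bsub>N t\<^esub> g s t y \<oplus>\<^bsub>N t\<^esub> z)"
        using z Ht.a_subset by (simp add: Nt.r_neg2 subsetD)
      then show "z \<in> cok_map M N phi g s t X"
        unfolding cok_map_def using \<open>y \<in> X\<close> gy z by blast
    qed
  qed
  then show ?thesis by (simp add: cok_mod_def)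
qed

lemma ephemeral_ker_canon:
  assumes "\<forall>i\<in>I. pmod R (M i) (f i)"
  shows "ephemeral (ker_mod (sum_mod I M) (prod_mod I M) canon) (ker_map (fam_map I f))"
  unfolding ephemeral_def
proof (intro allI impI ballI)
  fix s t x assume "ll s t" and x: "x \<in> carrier (ker_mod (sum_mod I M) (prod_mod I M) canon s)"
  have "x = (\<lambda>i\<in>I. \<zero>\<^bsub>M i s\<^esub>)"
    using x by (simp add: ker_mod_def canon_def prod_mod_def)
  moreover have "f i s t \<zero>\<^bsub>M i s\<^esub> = \<zero>\<^bsub>M i t\<^esub>" if "i \<in> I" for i
    using assms that ll_imp_le[OF \<open>ll s t\<close>] by (intro linmap_zero) (auto simp: pmod_def)
  ultimately show "ker_map (fam_map I f) s t x = \<zero>\<^bsub>ker_mod (sum_mod I M) (prod_mod I M) canon t\<^esub>"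
    by (auto simp: ker_map_def ker_mod_def sum_mod_def fam_map_def intro!: restrict_ext)
qed

lemma ephemeral_cok_canon:
  assumes "field R" and pm: "\<forall>i\<in>I. pmod R (M i) (f i)"
    and "q_tame R (prod_mod I M) (fam_map I f)"
  shows "ephemeral (cok_mod (sum_mod I M) (prod_mod I M) canon)
    (cok_map (sum_mod I M) (prod_mod I M) canon (fam_map I f))"
  unfolding ephemeral_def
proof (intro allI impI ballI)
  fix s t X assume "ll s t" and X: "X \<in> carrier (cok_mod (sum_mod I M) (prod_mod I M) canon s)"
  have cr: "cring R" using \<open>field R\<close> by (simp add: field_def domain_def)
  have mods: "\<forall>i\<in>I. module R (M i u)" for u using pm by (simp add: pmod_def)
  have lin: "\<forall>i\<in>I. linmap R (M i s) (M i t) (f i s t)"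
    using pm ll_imp_le[OF \<open>ll s t\<close>] by (simp add: pmod_def)
  have im: "im_sp (sum_mod I M) canon u = carrier (sum_mod I M u)" for u
    by (simp add: im_sp_def canon_def)
  have "finite_rank R (prod_mod I M s) (prod_mod I M t) (fam_map I f s t)"
    using assms(3) \<open>ll s t\<close> by (simp add: q_tame_def)
  then have "finite {i \<in> I. \<exists>x\<in>carrier (M i s). f i s t x \<noteq> \<zero>\<^bsub>M i t\<^esub>}"
    using finite_rank_fam_map_imp_finite_support[of R I M s t f] \<open>field R\<close> mods lin by blast
  then have "fam_map I f s t ` carrier (prod_mod I M s) \<subseteq> im_sp (sum_mod I M) canon t"
    unfolding im using fam_map_into_sum_mod[of I R M s t f] lin by blast
  moreover have "abelian_group (prod_mod I M u)" for u
    using module_prod_mod[of R I M u] cr mods module.axioms(2) by blast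
  moreover have "additive_subgroup (im_sp (sum_mod I M) canon u) (prod_mod I M u)" for u
    unfolding im using additive_subgroup_sum_mod[of R I M u] cr mods by blast
  ultimately show "cok_map (sum_mod I M) (prod_mod I M) canon (fam_map I f) s t X
      = \<zero>\<^bsub>cok_mod (sum_mod I M) (prod_mod I M) canon t\<^esub>"
    using X by (intro cok_map_eq_zero_if_into_image)
qed

theorem lemma3p9:
  fixes R :: "('k, 'r) ring_scheme"
    and I :: "'i set"
    and M :: "'i \<Rightarrow> real^'n \<Rightarrow> ('k, 'v) module"
    and f :: "'i \<Rightarrow> real^'n \<Rightarrow> real^'n \<Rightarrow> 'v \<Rightarrow> 'v"
  assumes "field R"
    and "\<forall>i\<in>I. pmod R (M i) (f i)"
    and "q_tame R (prod_mod I M) (fam_map I f)"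
  shows "weak_equiv (sum_mod I M) (fam_map I f) (prod_mod I M) (fam_map I f) canon"
  using ephemeral_ker_canon[OF assms(2)] ephemeral_cok_canon[OF assms]
  by (simp add: weak_equiv_def)

end
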